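(* For every indexed grammar $G$ there is a grounded indexed grammar $G'$ such that $L(G') = L(G)$.
   Context: An indexed grammar is a tuple $G=(N,T,F,P,S)$ where $N$ (nonterminals), $T$ (terminals), $F$ (stack symbols) are finite alphabets, $S\in N$ is the start symbol, and $P$ is a finite set of productions of the forms $A\to r$, $A\to Bf$, $Af\to r$ with $A,B\in N$, $f\in F$, $r\in(N\cup T)^*$. Sentential forms are strings over $NF^*\cup T$; in $Af_1\cdots f_k$ the string $f_1\cdots f_k$ is the stack of $A$ with $f_1$ on top. For $r\in(N\cup T)^*$ and $x\in F^*$, $r\{x\}$ denotes $r$ with every $A\in N$ replaced by $Ax$. One writes $q\to r$ if $q=q_1\,Ax\,q_2$ and $r=q_1\,p\{y\}\,q_2$ for some $q_1,q_2\in(NF^*\cup T)^*$, $A\in N$, $x,y\in F^*$, $p\in (N\cup T)^*$, where either (1) $A\to p\in P$ and $y=x$, or (2) $p=B\in N$, $A\to Bf\in P$ and $y=fx$, or (3) $Af\to p\in P$ and $x=fy$. Let $\xrightarrow{*}$ be the reflexive transitive closure; $L(Ax)=\{s\in T^*: Ax\xrightarrow{*}s\}$ and $L(G)=L(S)$ (start symbol with empty stack). $G$ is grounded if there is a symbol $\$\in F$ (bottom-of-stack symbol) such that every production of $P$ has one of the forms $S\to A\$$, $A\to r$, $A\to Bf$, $Af\to r$, $A\$\to s$, with $A,B\in N\setminus\{S\}$, $f\in F\setminus\{\$\}$, $r\in(N\setminus\{S\})^+$, $s\in T^*$. *)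

theory Defs
  imports Main
begin

datatype ('n, 't) sym = NT 'n | Tm 't

text \<open>Productions: A -> r, A -> B f, A f -> r.\<close>
datatype ('n, 't, 'f) production =
    Plain 'n "('n, 't) sym list"
  | Push 'n 'n 'f
  | Pop 'n 'f "('n, 't) sym list"

record ('n, 't, 'f) igrammar =
  Nts :: "'n set"
  Tms :: "'t set"
  Stk :: "'f set"
  Prods :: "('n, 't, 'f) production set"
  Start :: 'n

definition sym_ok :: "'n set \<Rightarrow> 't set \<Rightarrow> ('n, 't) sym \<Rightarrow> bool" where
  "sym_ok N T s = (case s of NT A \<Rightarrow> A \<in> N | Tm a \<Rightarrow> a \<in> T)"

fun prod_ok :: "'n set \<Rightarrow> 't set \<Rightarrow> 'f set \<Rightarrow> ('n, 't, 'f) production \<Rightarrow> bool" where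
  "prod_ok N T F (Plain A r) = (A \<in> N \<and> (\<forall>s\<in>set r. sym_ok N T s))"
| "prod_ok N T F (Push A B f) = (A \<in> N \<and> B \<in> N \<and> f \<in> F)"
| "prod_ok N T F (Pop A f r) = (A \<in> N \<and> f \<in> F \<and> (\<forall>s\<in>set r. sym_ok N T s))"

definition indexed_grammar :: "('n, 't, 'f) igrammar \<Rightarrow> bool" where
  "indexed_grammar G \<longleftrightarrow>
     finite (Nts G) \<and> finite (Tms G) \<and> finite (Stk G) \<and> finite (Prods G) \<and>
     Start G \<in> Nts G \<and> (\<forall>p\<in>Prods G. prod_ok (Nts G) (Tms G) (Stk G) p)"

text \<open>Items of sentential forms: a nonterminal with its stack (top first), or a terminal.\<close>
datatype ('n, 't, 'f) item = NTi 'n "'f list" | TmI 't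

fun inst :: "'f list \<Rightarrow> ('n, 't) sym \<Rightarrow> ('n, 't, 'f) item" where
  "inst x (NT A) = NTi A x"
| "inst x (Tm a) = TmI a"

inductive step :: "('n, 't, 'f) igrammar \<Rightarrow> ('n, 't, 'f) item list \<Rightarrow> ('n, 't, 'f) item list \<Rightarrow> bool"
  for G where
  plain: "Plain A p \<in> Prods G \<Longrightarrow>
     step G (q1 @ [NTi A x] @ q2) (q1 @ map (inst x) p @ q2)"
| push: "Push A B f \<in> Prods G \<Longrightarrow>
     step G (q1 @ [NTi A x] @ q2) (q1 @ [NTi B (f # x)] @ q2)"
| pop: "Pop A f p \<in> Prods G \<Longrightarrow>
     step G (q1 @ [NTi A (f # y)] @ q2) (q1 @ map (inst y) p @ q2)"

abbreviation derives where "derives G \<equiv> (step G)\<^sup>*\<^sup>*"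

definition lang_of :: "('n, 't, 'f) igrammar \<Rightarrow> 'n \<Rightarrow> 'f list \<Rightarrow> 't list set" where
  "lang_of G A x = {s. s \<in> lists (Tms G) \<and> derives G [NTi A x] (map TmI s)}"

definition lang :: "('n, 't, 'f) igrammar \<Rightarrow> 't list set" where
  "lang G = lang_of G (Start G) []"

text \<open>Grounded grammars, with bottom-of-stack symbol d.\<close>
fun grounded_prod :: "('n, 't, 'f) igrammar \<Rightarrow> 'f \<Rightarrow> ('n, 't, 'f) production \<Rightarrow> bool" where
  "grounded_prod G d (Plain A r) =
     (A \<noteq> Start G \<and> r \<noteq> [] \<and> (\<forall>s\<in>set r. \<exists>B. s = NT B \<and> B \<in> Nts G - {Start G}))"
| "grounded_prod G d (Push A B f) =
     ((A = Start G \<and> f = d \<and> B \<in> Nts G - {Start G}) \<or>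
      (A \<in> Nts G - {Start G} \<and> B \<in> Nts G - {Start G} \<and> f \<in> Stk G - {d}))"
| "grounded_prod G d (Pop A f r) =
     (A \<in> Nts G - {Start G} \<and>
      ((f \<in> Stk G - {d} \<and> r \<noteq> [] \<and> (\<forall>s\<in>set r. \<exists>B. s = NT B \<and> B \<in> Nts G - {Start G})) \<or>
       (f = d \<and> (\<forall>s\<in>set r. \<exists>a. s = Tm a \<and> a \<in> Tms G))))"

definition grounded :: "('n, 't, 'f) igrammar \<Rightarrow> bool" where
  "grounded G \<longleftrightarrow> (\<exists>d\<in>Stk G. \<forall>p\<in>Prods G. grounded_prod G d p)"

end

theory Submission
  imports Defs
begin

text \<open>
  Add a new start symbol S with the single production S \<rightarrow> A $, where A is the old start
  symbol, so that every stack carries the bottom symbol $. In right-hand sides replace each terminal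
  a by a new nonterminal T_a and the empty right-hand side by a new nonterminal E; T_a pops its
  stack down to $ and then produces a, while E pops its stack and produces nothing. Each step of G
  is simulated by a step of the new grammar followed by such pops. Conversely, on sentential forms
  whose stacks are codes of old stacks, decoding S as A, T_a as a and E as the empty word maps
  every step of the new grammar to at most one step of G, because the new productions only act on
  S, T_a and E, whose stacks decoding ignores.
\<close>

lemma step_context: "step G u v \<Longrightarrow> step G (p @ u @ q) (p @ v @ q)"
proof (induction rule: step.induct)
  case (plain A r q1 x q2)
  then show ?case using step.plain[of A r G "p @ q1" x "q2 @ q"] by simp
next
  case (push A B f q1 x q2)
  then show ?case using step.push[of A B f G "p @ q1" x "q2 @ q"] by simp
next
  case (pop A f r q1 y q2)
  then show ?case using step.pop[of A f r G "p @ q1" y "q2 @ q"] by simp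
qed

lemma derives_context: "derives G u v \<Longrightarrow> derives G (p @ u @ q) (p @ v @ q)"
  by (induction rule: rtranclp_induct) (auto intro: rtranclp.rtrancl_into_rtrancl step_context)

lemma derives_append: "derives G u u' \<Longrightarrow> derives G v v' \<Longrightarrow> derives G (u @ v) (u' @ v')"
  using derives_context[of G u u' "[]" v] derives_context[of G v v' u' "[]"] by simp

lemma derives_concat_map:
  "(\<And>s. s \<in> set xs \<Longrightarrow> derives G (g s) (h s)) \<Longrightarrow> derives G (concat (map g xs)) (concat (map h xs))"
  by (induction xs) (auto intro: derives_append)

lemma step_Plain_single: "Plain A p \<in> Prods G \<Longrightarrow> step G [NTi A x] (map (inst x) p)"
  using step.plain[of A p G "[]" x "[]"] by simp

lemma step_Push_single: "Push A B f \<in> Prods G \<Longrightarrow> step G [NTi A x] [NTi B (f # x)]"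
  using step.push[of A B f G "[]" x "[]"] by simp

lemma step_Pop_single: "Pop A f p \<in> Prods G \<Longrightarrow> step G [NTi A (f # y)] (map (inst y) p)"
  using step.pop[of A f p G "[]" y "[]"] by simp

lemma step_single_cases:
  assumes "step G [i] w"
  obtains (Plain) A p x where "Plain A p \<in> Prods G" "i = NTi A x" "w = map (inst x) p"
  | (Push) A B f x where "Push A B f \<in> Prods G" "i = NTi A x" "w = [NTi B (f # x)]"
  | (Pop) A f p y where "Pop A f p \<in> Prods G" "i = NTi A (f # y)" "w = map (inst y) p"
  using assms by cases (auto simp: Cons_eq_append_conv)

lemma step_focus:
  assumes "step G u v"
  obtains q1 i w q2 where "u = q1 @ [i] @ q2" "v = q1 @ w @ q2" "step G [i] w"
  using assms by cases (blast intro: step_Plain_single step_Push_single step_Pop_single)+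

lemma derives_item_simulation:
  fixes h :: "('n, 't, 'f) item \<Rightarrow> ('m, 's, 'g) item list"
  assumes sim: "\<And>i w. step G [i] w \<Longrightarrow> Q i \<Longrightarrow>
      derives G' (h i) (concat (map h w)) \<and> (\<forall>j\<in>set w. Q j)"
    and "derives G u v" and "\<forall>i\<in>set u. Q i"
  shows "derives G' (concat (map h u)) (concat (map h v)) \<and> (\<forall>j\<in>set v. Q j)"
  using assms(2,3)
proof (induction rule: rtranclp_induct)
  case base
  then show ?case by simp
next
  case (step v v')
  then have IH: "derives G' (concat (map h u)) (concat (map h v))" "\<forall>j\<in>set v. Q j" by auto
  from \<open>step G v v'\<close> obtain q1 i w q2 where v: "v = q1 @ [i] @ q2" and v': "v' = q1 @ w @ q2"
    and st: "step G [i] w" by (rule step_focus)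
  with IH(2) sim have "derives G' (h i) (concat (map h w))" "\<forall>j\<in>set w. Q j" by auto
  then show ?case
    using IH derives_context[of G' "h i" _ "concat (map h q1)" "concat (map h q2)"]
    unfolding v v' by (auto intro: rtranclp_trans)
qed

lemma concat_map_TmI: "(\<And>a. h (TmI a) = [TmI a]) \<Longrightarrow> concat (map h (map TmI s)) = map TmI s"
  by (induction s) auto

text \<open>
  Codes in the grounded grammar: nonterminal 0 is the new start symbol, 1 the eraser E, even
  codes 2 + 2 c are the old nonterminals and odd codes 3 + 2 c the carriers T_a of the
  terminals; stack symbol 0 is the bottom symbol and Suc c codes an old stack symbol.
\<close>

locale grounding =
  fixes G :: "('n, 't, 'f) igrammar"
    and cN :: "'n \<Rightarrow> nat" and cT :: "'t \<Rightarrow> nat" and cF :: "'f \<Rightarrow> nat"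
  assumes indexed: "indexed_grammar G"
    and inj_cN: "inj_on cN (Nts G)" and inj_cT: "inj_on cT (Tms G)" and inj_cF: "inj_on cF (Stk G)"
begin

definition nt_code :: "'n \<Rightarrow> nat" where
  "nt_code A = 2 + 2 * cN A"

definition carrier_code :: "'t \<Rightarrow> nat" where
  "carrier_code a = 3 + 2 * cT a"

definition stack_code :: "'f list \<Rightarrow> nat list" where
  "stack_code x = map (\<lambda>f. Suc (cF f)) x @ [0]"

fun sym_code :: "('n, 't) sym \<Rightarrow> (nat, 't) sym" where
  "sym_code (NT B) = NT (nt_code B)"
| "sym_code (Tm a) = NT (carrier_code a)"

definition rhs_code :: "('n, 't) sym list \<Rightarrow> (nat, 't) sym list" where
  "rhs_code r = (if r = [] then [NT 1] else map sym_code r)"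

fun prod_code :: "('n, 't, 'f) production \<Rightarrow> (nat, 't, nat) production" where
  "prod_code (Plain A r) = Plain (nt_code A) (rhs_code r)"
| "prod_code (Push A B f) = Push (nt_code A) (nt_code B) (Suc (cF f))"
| "prod_code (Pop A f r) = Pop (nt_code A) (Suc (cF f)) (rhs_code r)"

definition stack_codes :: "nat set" where
  "stack_codes = Suc ` cF ` Stk G"

definition ground_prods :: "(nat, 't, nat) production set" where
  "ground_prods =
     {Push 0 (nt_code (Start G)) 0} \<union> prod_code ` Prods G
     \<union> (\<lambda>f. Pop 1 f [NT 1]) ` stack_codes \<union> {Pop 1 0 []}
     \<union> (\<lambda>(a, f). Pop (carrier_code a) f [NT (carrier_code a)]) ` (Tms G \<times> stack_codes)
     \<union> (\<lambda>a. Pop (carrier_code a) 0 [Tm a]) ` Tms G"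

definition ground_nts :: "nat set" where
  "ground_nts = {0, 1} \<union> nt_code ` Nts G \<union> carrier_code ` Tms G"

definition ground :: "(nat, 't, nat) igrammar" where
  "ground =
     \<lparr>Nts = ground_nts, Tms = Tms G, Stk = insert 0 stack_codes, Prods = ground_prods, Start = 0\<rparr>"

lemma ground_simps [simp]:
  "Nts ground = ground_nts" "Tms ground = Tms G" "Stk ground = insert 0 stack_codes"
  "Prods ground = ground_prods" "Start ground = 0"
  by (simp_all add: ground_def)

lemma code_distinct [simp]:
  "nt_code A \<noteq> 0" "nt_code A \<noteq> Suc 0" "carrier_code a \<noteq> 0" "carrier_code a \<noteq> Suc 0"
  "0 < nt_code A" "0 < carrier_code a" "nt_code A \<noteq> carrier_code a" "carrier_code a \<noteq> nt_code A"
  "nt_code A = nt_code B \<longleftrightarrow> cN A = cN B" "carrier_code a = carrier_code b \<longleftrightarrow> cT a = cT b"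
  unfolding nt_code_def carrier_code_def by presburger+

lemma G_finite: "finite (Nts G)" "finite (Tms G)" "finite (Stk G)" "finite (Prods G)"
  and Start_in_Nts: "Start G \<in> Nts G"
  and prod_ok_G: "p \<in> Prods G \<Longrightarrow> prod_ok (Nts G) (Tms G) (Stk G) p"
  using indexed unfolding indexed_grammar_def by auto

lemma ground_prods_intros [simp]:
  "Push 0 (nt_code (Start G)) 0 \<in> ground_prods"
  "p \<in> Prods G \<Longrightarrow> prod_code p \<in> ground_prods"
  "f \<in> stack_codes \<Longrightarrow> Pop 1 f [NT 1] \<in> ground_prods"
  "Pop 1 0 [] \<in> ground_prods"
  "a \<in> Tms G \<Longrightarrow> f \<in> stack_codes \<Longrightarrow> Pop (carrier_code a) f [NT (carrier_code a)] \<in> ground_prods"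
  "a \<in> Tms G \<Longrightarrow> Pop (carrier_code a) 0 [Tm a] \<in> ground_prods"
  unfolding ground_prods_def by force+

lemma rhs_code_grounded:
  assumes "\<forall>s\<in>set r. sym_ok (Nts G) (Tms G) s"
  shows "rhs_code r \<noteq> [] \<and> (\<forall>s\<in>set (rhs_code r). \<exists>B. s = NT B \<and> B \<in> ground_nts - {0})"
proof -
  have "\<exists>B. sym_code s = NT B \<and> B \<in> ground_nts - {0}" if "sym_ok (Nts G) (Tms G) s" for s
    using that by (cases s) (auto simp: sym_ok_def ground_nts_def)
  with assms show ?thesis by (auto simp: rhs_code_def ground_nts_def)
qed

lemma prod_code_grounded: "p \<in> Prods G \<Longrightarrow> grounded_prod ground 0 (prod_code p)"
  using prod_ok_G[of p] rhs_code_grounded by (cases p) (auto simp: ground_nts_def stack_codes_def)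

lemma grounded_ground: "grounded ground"
proof -
  have "\<forall>p\<in>ground_prods. grounded_prod ground 0 p"
    unfolding ground_prods_def using prod_code_grounded Start_in_Nts
    by (auto simp: ground_nts_def stack_codes_def)
  then show ?thesis unfolding grounded_def by simp
qed

lemma indexed_ground: "indexed_grammar ground"
proof -
  have sym: "sym_ok ground_nts (Tms G) s"
    if "s \<in> set (rhs_code r)" "\<forall>s\<in>set r. sym_ok (Nts G) (Tms G) s" for s r
    using that rhs_code_grounded[of r] by (auto simp: sym_ok_def)
  have "prod_ok ground_nts (Tms G) (insert 0 stack_codes) (prod_code p)" if "p \<in> Prods G" for p
    using prod_ok_G[OF that] sym by (cases p) (auto simp: ground_nts_def stack_codes_def)
  then have "\<forall>p\<in>ground_prods. prod_ok ground_nts (Tms G) (insert 0 stack_codes) p"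
    unfolding ground_prods_def using Start_in_Nts by (auto simp: ground_nts_def sym_ok_def)
  moreover have "finite ground_prods"
    unfolding ground_prods_def stack_codes_def using G_finite by auto
  ultimately show ?thesis
    unfolding indexed_grammar_def using G_finite by (auto simp: ground_nts_def stack_codes_def)
qed

fun stack_ok :: "('n, 't, 'f) item \<Rightarrow> bool" where
  "stack_ok (NTi A x) \<longleftrightarrow> set x \<subseteq> Stk G"
| "stack_ok (TmI a) \<longleftrightarrow> True"

fun encode :: "('n, 't, 'f) item \<Rightarrow> (nat, 't, nat) item list" where
  "encode (NTi A x) = [NTi (nt_code A) (stack_code x)]"
| "encode (TmI a) = [TmI a]"

lemma stack_ok_inst: "set x \<subseteq> Stk G \<Longrightarrow> stack_ok (inst x s)"
  by (cases s) auto

lemma eraser_derives_Nil: "set x \<subseteq> Stk G \<Longrightarrow> derives ground [NTi 1 (stack_code x)] []"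
proof (induction x)
  case Nil
  have "Pop 1 0 [] \<in> Prods ground" using ground_prods_intros(4) by simp
  from step_Pop_single[OF this, of "[]"] show ?case by (simp add: stack_code_def)
next
  case (Cons f x)
  then have "Pop 1 (Suc (cF f)) [NT 1] \<in> Prods ground"
    using ground_prods_intros(3)[of "Suc (cF f)"] by (simp add: stack_codes_def)
  from step_Pop_single[OF this, of "stack_code x"]
  have "step ground [NTi 1 (stack_code (f # x))] [NTi 1 (stack_code x)]"
    by (simp add: stack_code_def)
  with Cons show ?case by (simp add: converse_rtranclp_into_rtranclp)
qed

lemma carrier_derives_Tm:
  "a \<in> Tms G \<Longrightarrow> set x \<subseteq> Stk G \<Longrightarrow> derives ground [NTi (carrier_code a) (stack_code x)] [TmI a]"
proof (induction x)
  case Nil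
  have "Pop (carrier_code a) 0 [Tm a] \<in> Prods ground" using Nil by simp
  from step_Pop_single[OF this, of "[]"] show ?case by (simp add: stack_code_def)
next
  case (Cons f x)
  then have "Pop (carrier_code a) (Suc (cF f)) [NT (carrier_code a)] \<in> Prods ground"
    by (simp add: stack_codes_def)
  from step_Pop_single[OF this, of "stack_code x"]
  have "step ground
      [NTi (carrier_code a) (stack_code (f # x))] [NTi (carrier_code a) (stack_code x)]"
    by (simp add: stack_code_def)
  with Cons show ?case by (simp add: converse_rtranclp_into_rtranclp)
qed

lemma rhs_code_derives_encode:
  assumes "set x \<subseteq> Stk G" and "\<forall>s\<in>set r. sym_ok (Nts G) (Tms G) s"
  shows "derives ground
    (map (inst (stack_code x)) (rhs_code r)) (concat (map encode (map (inst x) r)))"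
proof (cases "r = []")
  case True
  then show ?thesis using eraser_derives_Nil[OF assms(1)] by (simp add: rhs_code_def)
next
  case False
  have "derives ground (concat (map (\<lambda>s. [inst (stack_code x) (sym_code s)]) r))
      (concat (map (\<lambda>s. encode (inst x s)) r))"
  proof (rule derives_concat_map)
    fix s assume "s \<in> set r"
    with assms show "derives ground [inst (stack_code x) (sym_code s)] (encode (inst x s))"
      by (cases s) (auto simp: sym_ok_def carrier_derives_Tm)
  qed
  then show ?thesis using False by (simp add: rhs_code_def comp_def)
qed

lemma encode_step:
  assumes "step G [i] w" and "stack_ok i"
  shows "derives ground (encode i) (concat (map encode w)) \<and> (\<forall>j\<in>set w. stack_ok j)"
  using assms(1)
proof (cases rule: step_single_cases)
  case (Plain A r x)
  have "step ground (encode i) (map (inst (stack_code x)) (rhs_code r))"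
    using step_Plain_single[of "nt_code A" "rhs_code r" ground]
      ground_prods_intros(2)[OF Plain(1)] Plain(2)
    by simp
  moreover have "derives ground (map (inst (stack_code x)) (rhs_code r)) (concat (map encode w))"
    using rhs_code_derives_encode assms(2) prod_ok_G[OF Plain(1)] Plain(2,3) by simp
  moreover have "\<forall>j\<in>set w. stack_ok j"
    using assms(2) Plain(2,3) by (auto intro: stack_ok_inst)
  ultimately show ?thesis by (meson converse_rtranclp_into_rtranclp)
next
  case (Push A B f x)
  have "step ground (encode i) (concat (map encode w))"
    using step_Push_single[of "nt_code A" "nt_code B" "Suc (cF f)" ground]
      ground_prods_intros(2)[OF Push(1)] Push(2,3)
    by (simp add: stack_code_def)
  moreover have "\<forall>j\<in>set w. stack_ok j"
    using assms(2) Push prod_ok_G[OF Push(1)] by simp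
  ultimately show ?thesis by simp
next
  case (Pop A f r y)
  have "step ground (encode i) (map (inst (stack_code y)) (rhs_code r))"
    using step_Pop_single[of "nt_code A" "Suc (cF f)" "rhs_code r" ground]
      ground_prods_intros(2)[OF Pop(1)] Pop(2)
    by (simp add: stack_code_def)
  moreover have "derives ground (map (inst (stack_code y)) (rhs_code r)) (concat (map encode w))"
    using rhs_code_derives_encode assms(2) prod_ok_G[OF Pop(1)] Pop(2,3) by simp
  moreover have "\<forall>j\<in>set w. stack_ok j"
    using assms(2) Pop(2,3) by (auto intro: stack_ok_inst)
  ultimately show ?thesis by (meson converse_rtranclp_into_rtranclp)
qed

lemma ground_Plain_cases:
  assumes "Plain A0 p \<in> ground_prods"
  obtains A r where "Plain A r \<in> Prods G" "A0 = nt_code A" "p = rhs_code r"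
proof -
  from assms obtain q where "q \<in> Prods G" "Plain A0 p = prod_code q"
    unfolding ground_prods_def by auto
  with that show thesis by (cases q) auto
qed

lemma ground_Push_cases:
  assumes "Push A0 B0 f0 \<in> ground_prods"
  obtains (start) "A0 = 0" "B0 = nt_code (Start G)" "f0 = 0"
  | (code) A B f where "Push A B f \<in> Prods G" "A0 = nt_code A" "B0 = nt_code B" "f0 = Suc (cF f)"
proof -
  consider "Push A0 B0 f0 = Push 0 (nt_code (Start G)) 0"
    | q where "q \<in> Prods G" "Push A0 B0 f0 = prod_code q"
    using assms unfolding ground_prods_def by auto
  then show thesis
  proof cases
    case (2 q)
    with code show thesis by (cases q) auto
  qed (use start in auto)
qed

lemma ground_Pop_cases:
  assumes "Pop A0 f0 p \<in> ground_prods"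
  obtains (code) A f r
    where "Pop A f r \<in> Prods G" "A0 = nt_code A" "f0 = Suc (cF f)" "p = rhs_code r"
  | (eraser) "A0 = 1" "p = [NT 1] \<or> p = []"
  | (carrier) a where "a \<in> Tms G" "A0 = carrier_code a" "p = [NT (carrier_code a)] \<or> p = [Tm a]"
proof -
  consider q where "q \<in> Prods G" "Pop A0 f0 p = prod_code q" | "A0 = 1" "p = [NT 1] \<or> p = []"
    | a where "a \<in> Tms G" "A0 = carrier_code a" "p = [NT (carrier_code a)] \<or> p = [Tm a]"
    using assms unfolding ground_prods_def by auto
  then show thesis
  proof cases
    case (1 q)
    with code show thesis by (cases q) auto
  qed (use eraser carrier in auto)
qed

definition decode_stack :: "nat list \<Rightarrow> 'f list" where
  "decode_stack st = map (\<lambda>k. inv_into (Stk G) cF (k - 1)) (butlast st)"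

text \<open>
  A carrier decodes to its terminal whatever its stack, since it only pops that stack.
\<close>

fun decode :: "(nat, 't, nat) item \<Rightarrow> ('n, 't, 'f) item list" where
  "decode (TmI a) = [TmI a]"
| "decode (NTi n st) =
     (if n = 0 then [NTi (Start G) []] else if n = 1 then []
      else if even n then [NTi (inv_into (Nts G) cN ((n - 2) div 2)) (decode_stack st)]
      else [TmI (inv_into (Tms G) cT ((n - 3) div 2))])"

declare decode.simps(2) [simp del]

fun well_coded :: "(nat, 't, nat) item \<Rightarrow> bool" where
  "well_coded (TmI a) \<longleftrightarrow> True"
| "well_coded (NTi n st) \<longleftrightarrow> (n = 0 \<and> st = []) \<or> n = 1 \<or>
     (\<exists>A\<in>Nts G. \<exists>x. set x \<subseteq> Stk G \<and> n = nt_code A \<and> st = stack_code x) \<or>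
     (\<exists>a\<in>Tms G. n = carrier_code a)"

lemma decode_stack_code: "set x \<subseteq> Stk G \<Longrightarrow> decode_stack (stack_code x) = x"
  unfolding decode_stack_def stack_code_def using inj_cF by (induction x) auto

lemma decode_special [simp]: "decode (NTi 0 st) = [NTi (Start G) []]" "decode (NTi (Suc 0) st) = []"
  by (simp_all add: decode.simps)

lemma decode_nt_code:
  "A \<in> Nts G \<Longrightarrow> set x \<subseteq> Stk G \<Longrightarrow> decode (NTi (nt_code A) (stack_code x)) = [NTi A x]"
  by (simp add: decode.simps nt_code_def decode_stack_code inj_cN)

lemma decode_carrier_code: "a \<in> Tms G \<Longrightarrow> decode (NTi (carrier_code a) st) = [TmI a]"
  by (simp add: decode.simps carrier_code_def inj_cT)

lemma well_coded_nt_code: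
  "well_coded (NTi (nt_code A) st) \<Longrightarrow> A \<in> Nts G \<Longrightarrow> \<exists>x. set x \<subseteq> Stk G \<and> st = stack_code x"
  using inj_on_eq_iff[OF inj_cN] by auto

lemma stack_code_eq_Cons:
  "set x \<subseteq> Stk G \<Longrightarrow> f \<in> Stk G \<Longrightarrow> stack_code x = Suc (cF f) # y \<Longrightarrow> \<exists>x'. x = f # x' \<and> y = stack_code x'"
  by (cases x) (auto simp: stack_code_def inj_on_eq_iff[OF inj_cF])

lemma decode_rhs_code:
  assumes "set x \<subseteq> Stk G" and "\<forall>s\<in>set r. sym_ok (Nts G) (Tms G) s"
  shows "concat (map decode (map (inst (stack_code x)) (rhs_code r))) = map (inst x) r"
proof -
  have "decode (inst (stack_code x) (sym_code s)) = [inst x s]" if "sym_ok (Nts G) (Tms G) s" for s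
    using that assms(1) by (cases s) (auto simp: sym_ok_def decode_nt_code decode_carrier_code)
  then have "concat (map decode (map (inst (stack_code x)) (map sym_code r))) = map (inst x) r"
    using assms(2) by (induction r) auto
  then show ?thesis by (simp add: rhs_code_def comp_assoc)
qed

lemma well_coded_rhs_code:
  assumes "set x \<subseteq> Stk G" and "\<forall>s\<in>set r. sym_ok (Nts G) (Tms G) s"
  shows "\<forall>j\<in>set (map (inst (stack_code x)) (rhs_code r)). well_coded j"
proof -
  have "well_coded (inst (stack_code x) (sym_code s))" if "sym_ok (Nts G) (Tms G) s" for s
    using that assms(1) by (cases s) (auto simp: sym_ok_def)
  with assms(2) show ?thesis by (auto simp: rhs_code_def)
qed

lemma decode_Plain_step:
  assumes "Plain A0 p \<in> ground_prods" and "well_coded (NTi A0 x)"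
  shows "step G (decode (NTi A0 x)) (concat (map decode (map (inst x) p)))
    \<and> (\<forall>j\<in>set (map (inst x) p). well_coded j)"
proof -
  obtain A r where P: "Plain A r \<in> Prods G" "A0 = nt_code A" "p = rhs_code r"
    using assms(1) by (rule ground_Plain_cases)
  have A: "A \<in> Nts G" and r: "\<forall>s\<in>set r. sym_ok (Nts G) (Tms G) s"
    using prod_ok_G[OF P(1)] by auto
  obtain x0 where x0: "set x0 \<subseteq> Stk G" "x = stack_code x0"
    using well_coded_nt_code assms(2) P(2) A by blast
  show ?thesis
    using step_Plain_single[OF P(1), of x0] decode_nt_code[OF A x0(1)]
      decode_rhs_code[OF x0(1) r] well_coded_rhs_code[OF x0(1) r] P x0 by simp
qed

lemma decode_Push_step:
  assumes "Push A0 B0 f0 \<in> ground_prods" and "well_coded (NTi A0 x)"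
  shows "derives G (decode (NTi A0 x)) (decode (NTi B0 (f0 # x))) \<and> well_coded (NTi B0 (f0 # x))"
  using assms(1)
proof (cases rule: ground_Push_cases)
  case start
  with assms(2) have "x = []" by auto
  with start Start_in_Nts show ?thesis
    using decode_nt_code[of "Start G" "[]"] by (auto simp: stack_code_def)
next
  case (code A B f)
  have ok: "A \<in> Nts G" "B \<in> Nts G" "f \<in> Stk G" using prod_ok_G[OF code(1)] by auto
  obtain x0 where x0: "set x0 \<subseteq> Stk G" "x = stack_code x0"
    using well_coded_nt_code assms(2) code(2) ok(1) by blast
  have push: "f0 # x = stack_code (f # x0)" using code(4) x0(2) by (simp add: stack_code_def)
  have "step G (decode (NTi A0 x)) (decode (NTi B0 (f0 # x)))"
    using step_Push_single[OF code(1), of x0] code ok x0 push decode_nt_code[of B "f # x0"]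
    by (simp add: decode_nt_code)
  moreover have "well_coded (NTi B0 (f0 # x))" unfolding well_coded.simps
    using code(3) ok x0(1) push by (intro disjI2 disjI1 bexI[of _ B] exI[of _ "f # x0"]) auto
  ultimately show ?thesis by simp
qed

lemma decode_Pop_step:
  assumes "Pop A0 f0 p \<in> ground_prods" and "well_coded (NTi A0 (f0 # y))"
  shows "derives G (decode (NTi A0 (f0 # y))) (concat (map decode (map (inst y) p)))
    \<and> (\<forall>j\<in>set (map (inst y) p). well_coded j)"
  using assms(1)
proof (cases rule: ground_Pop_cases)
  case (code A f r)
  have ok: "A \<in> Nts G" "f \<in> Stk G" and r: "\<forall>s\<in>set r. sym_ok (Nts G) (Tms G) s"
    using prod_ok_G[OF code(1)] by auto
  obtain x0 where x0: "set x0 \<subseteq> Stk G" "f0 # y = stack_code x0"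
    using well_coded_nt_code assms(2) code(2) ok(1) by blast
  then obtain x1 where x1: "x0 = f # x1" "y = stack_code x1"
    using stack_code_eq_Cons ok(2) code(3) by metis
  have sx1: "set x1 \<subseteq> Stk G" using x0(1) x1(1) by simp
  show ?thesis
    using step_Pop_single[OF code(1), of x1] decode_nt_code[OF ok(1) x0(1)]
      decode_rhs_code[OF sx1 r] well_coded_rhs_code[OF sx1 r] code x0 x1 by simp
next
  case eraser
  then show ?thesis by auto
next
  case (carrier a)
  then show ?thesis by (auto simp: decode_carrier_code)
qed

lemma decode_step:
  assumes "step ground [i] w" and "well_coded i"
  shows "derives G (decode i) (concat (map decode w)) \<and> (\<forall>j\<in>set w. well_coded j)"
  using assms(1)
proof (cases rule: step_single_cases)
  case (Plain A p x)
  then show ?thesis using decode_Plain_step[of A p x] assms(2) by (simp add: r_into_rtranclp)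
next
  case (Push A B f x)
  then show ?thesis using decode_Push_step[of A B f x] assms(2) by simp
next
  case (Pop A f p y)
  then show ?thesis using decode_Pop_step[of A f p y] assms(2) by simp
qed

lemma lang_ground: "lang ground = lang G"
proof (intro equalityI subsetI)
  fix s assume "s \<in> lang ground"
  then have s: "s \<in> lists (Tms G)" "derives ground [NTi 0 []] (map TmI s)"
    by (auto simp: lang_def lang_of_def)
  have "derives G [NTi (Start G) []] (map TmI s)"
    using derives_item_simulation[of ground well_coded G decode, OF decode_step s(2)]
      concat_map_TmI[of decode s] by simp
  with s(1) show "s \<in> lang G" by (simp add: lang_def lang_of_def)
next
  fix s assume "s \<in> lang G"
  then have s: "s \<in> lists (Tms G)" "derives G [NTi (Start G) []] (map TmI s)"
    by (auto simp: lang_def lang_of_def)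
  have "step ground [NTi 0 []] (encode (NTi (Start G) []))"
    using step_Push_single[of 0 "nt_code (Start G)" 0 ground "[]"] by (simp add: stack_code_def)
  moreover have "derives ground (encode (NTi (Start G) [])) (map TmI s)"
    using derives_item_simulation[of G stack_ok ground encode, OF encode_step s(2)]
      concat_map_TmI[of encode s] by simp
  ultimately have "derives ground [NTi 0 []] (map TmI s)"
    by (rule converse_rtranclp_into_rtranclp)
  with s(1) show "s \<in> lang ground" by (simp add: lang_def lang_of_def)
qed

end

theorem proposition1:
  fixes G :: "('n, 't, 'f) igrammar"
  assumes "indexed_grammar G"
  shows "\<exists>G' :: (nat, 't, nat) igrammar.
           indexed_grammar G' \<and> Tms G' = Tms G \<and> grounded G' \<and> lang G' = lang G"
proof -
  have "finite (Nts G)" "finite (Tms G)" "finite (Stk G)"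
    using assms unfolding indexed_grammar_def by auto
  then obtain cN :: "'n \<Rightarrow> nat" and cT :: "'t \<Rightarrow> nat" and cF :: "'f \<Rightarrow> nat"
    where "inj_on cN (Nts G)" "inj_on cT (Tms G)" "inj_on cF (Stk G)"
    by (metis finite_imp_inj_to_nat_seg)
  then interpret grounding G cN cT cF
    using assms by unfold_locales
  show ?thesis
    using indexed_ground grounded_ground lang_ground by (intro exI[of _ ground]) simp
qed

end
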